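(* Consider the sampling phase of the algorithm SampLayer on an undirected graph $G$, with layers $L_0, L_1, L_2, L_{\geq 2}$, reachability scores $rs(\cdot)$ and baseline reachability $rs_0$ as in the context, after preprocessing has been completed (so $L_0$, $L_1$ and an estimate of $|L_{\geq 2}|$ are known, and uniformly random edges between $L_0$ and $L_1$ can be sampled without queries). Assume: (i) every $v \in L_2$ satisfies $rs_0 \le rs(v) \le c\cdot rs_0$ for some $c > 1$; (ii) $\alpha$ is the fraction of edges $e$ between $L_0$ and $L_1$ whose $L_1$-endpoint has at least one neighbor in $L_2$; (iii) $w = \mathbb{E}[|C(v)|]$, where $v \in L_{\geq 2}$ is distributed as the output of a single run of the procedure Reach and $C(v)$ is the component of $G_{\geq 2}$ containing $v$; (iv) for every component $C$ of $G_{\geq 2}$, the number of edges between $C$ and the rest of $G$ is at most $d\cdot|C|$ for an integer $d$. Then the expected number of queries made by SampLayer to sample a single node is $O\!\left(c\left(\frac{1}{\alpha} + w d\right)\right)$.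
   Context: The graph is undirected and accessed via node queries: querying a node reveals its neighbors. Layers: $L_0 \subseteq V$ is a set of already-queried nodes computed in preprocessing; $L_1 = \bigcup_{v\in L_0} N(v)\setminus L_0$; $L_2$ is the set of nodes at distance exactly $2$ from $L_0$; $L_{\geq 2} = V\setminus(L_0\cup L_1)$. $G_{\geq 2}$ is the graph on $L_{\geq 2}$ containing the edges of $G$ between $L_2$ and $L_{\geq 2}\setminus L_2$ and those with both endpoints in $L_{\geq 2}\setminus L_2$. Let $d^+(L_0)$ be the number of edges between $L_0$ and $L_1$. A reaching attempt: pick a uniformly random edge between $L_0$ and $L_1$ (no query), let $u$ be its $L_1$-endpoint, query $u$; if $u$ has no neighbor in $L_2$ the attempt fails; otherwise pick a random neighbor $v\in L_2$ of $u$, explore the component $C(v)$ of $G_{\geq 2}$ by BFS (querying its nodes), pick a uniformly random $w\in C(v)$ and compute its reachability score. The reachability score $rs(v)$ of $v\in L_{\geq 2}$ is the value such that a single attempt outputs $v$ with probability $rs(v)/d^+(L_0)$. Reach repeats attempts until one succeeds and returns the output node. Sampling phase (SampLayer's Sample): with $\bar n = |L_0|+|L_1|+\bar\ell_{\geq 2}$ ($\bar\ell_{\geq 2}$ the estimate of $|L_{\geq 2}|$), output a uniform node of $L_0$ with probability $|L_0|/\bar n$, a uniform node of $L_1$ with probability $|L_1|/\bar n$ (both without queries), and otherwise repeatedly call Reach to obtain $w$ and accept it with probability $\min(1, rs_0/rs(w))$ until a node is accepted. *)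

theory Defs
  imports "HOL-Probability.Probability"
begin

(* Undirected graph: vertex set V :: nat set, symmetric edge relation E :: (nat \<times> nat) set. *)

definition nbrs :: "(nat \<times> nat) set \<Rightarrow> nat \<Rightarrow> nat set" where
  "nbrs E v = {u. (v, u) \<in> E}"

definition layer1 :: "(nat \<times> nat) set \<Rightarrow> nat set \<Rightarrow> nat set" where
  "layer1 E L0 = (\<Union>v\<in>L0. nbrs E v) - L0"

definition layer2 :: "(nat \<times> nat) set \<Rightarrow> nat set \<Rightarrow> nat set" where
  "layer2 E L0 = (\<Union>u\<in>layer1 E L0. nbrs E u) - L0 - layer1 E L0"

definition layer_ge2 :: "nat set \<Rightarrow> (nat \<times> nat) set \<Rightarrow> nat set \<Rightarrow> nat set" where
  "layer_ge2 V E L0 = V - L0 - layer1 E L0"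

definition edges_ge2 :: "nat set \<Rightarrow> (nat \<times> nat) set \<Rightarrow> nat set \<Rightarrow> (nat \<times> nat) set" where
  "edges_ge2 V E L0 = {(x, y) \<in> E. x \<in> layer_ge2 V E L0 \<and> y \<in> layer_ge2 V E L0
       \<and> \<not> (x \<in> layer2 E L0 \<and> y \<in> layer2 E L0)}"

definition comp_ge2 :: "nat set \<Rightarrow> (nat \<times> nat) set \<Rightarrow> nat set \<Rightarrow> nat \<Rightarrow> nat set" where
  "comp_ge2 V E L0 v = {y. (v, y) \<in> (edges_ge2 V E L0)\<^sup>*}"

definition components_ge2 :: "nat set \<Rightarrow> (nat \<times> nat) set \<Rightarrow> nat set \<Rightarrow> nat set set" where
  "components_ge2 V E L0 = comp_ge2 V E L0 ` layer_ge2 V E L0"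

(* edges between L0 and L1, as (L0-endpoint, L1-endpoint) pairs; d^+(L0) is its cardinality *)
definition edges01 :: "(nat \<times> nat) set \<Rightarrow> nat set \<Rightarrow> (nat \<times> nat) set" where
  "edges01 E L0 = {(x, u). x \<in> L0 \<and> u \<in> layer1 E L0 \<and> (x, u) \<in> E}"

definition dplus :: "(nat \<times> nat) set \<Rightarrow> nat set \<Rightarrow> nat" where
  "dplus E L0 = card (edges01 E L0)"

definition alpha :: "(nat \<times> nat) set \<Rightarrow> nat set \<Rightarrow> real" where
  "alpha E L0 = real (card {(x, u) \<in> edges01 E L0. nbrs E u \<inter> layer2 E L0 \<noteq> {}})
                / real (card (edges01 E L0))"

(* queries needed to compute the reachability score of a node of component C:
   query every L1-neighbour of C (to learn its number of L2-neighbours) *)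
definition rs_cost :: "(nat \<times> nat) set \<Rightarrow> nat set \<Rightarrow> nat set \<Rightarrow> nat" where
  "rs_cost E L0 C = card {u \<in> layer1 E L0. \<exists>y\<in>C. (y, u) \<in> E}"

(* One reaching attempt: returns (Some output | None on failure, number of queries made) *)
definition attempt :: "nat set \<Rightarrow> (nat \<times> nat) set \<Rightarrow> nat set \<Rightarrow> (nat option \<times> nat) pmf" where
  "attempt V E L0 =
     do { (x, u) \<leftarrow> pmf_of_set (edges01 E L0);
          if nbrs E u \<inter> layer2 E L0 = {} then return_pmf (None, 1)
          else do { v \<leftarrow> pmf_of_set (nbrs E u \<inter> layer2 E L0);
                    w \<leftarrow> pmf_of_set (comp_ge2 V E L0 v);
                    return_pmf (Some w, 1 + card (comp_ge2 V E L0 v)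
                                           + rs_cost E L0 (comp_ge2 V E L0 v)) } }"

definition rs :: "nat set \<Rightarrow> (nat \<times> nat) set \<Rightarrow> nat set \<Rightarrow> nat \<Rightarrow> real" where
  "rs V E L0 v = real (dplus E L0) * pmf (map_pmf fst (attempt V E L0)) (Some v)"

partial_function (spmf) reach :: "nat set \<Rightarrow> (nat \<times> nat) set \<Rightarrow> nat set \<Rightarrow> nat \<Rightarrow> (nat \<times> nat) spmf" where
  "reach V E L0 acc =
     bind_spmf (spmf_of_pmf (attempt V E L0)) (\<lambda>(r, q).
       (case r of None \<Rightarrow> reach V E L0 (acc + q)
                | Some w \<Rightarrow> return_spmf (w, acc + q)))"

partial_function (spmf) reach_reject :: "nat set \<Rightarrow> (nat \<times> nat) set \<Rightarrow> nat set \<Rightarrow> real \<Rightarrow> nat \<Rightarrow> (nat \<times> nat) spmf" where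
  "reach_reject V E L0 rs0 acc =
     bind_spmf (reach V E L0 0) (\<lambda>(w, q).
       bind_spmf (spmf_of_pmf (bernoulli_pmf (min 1 (rs0 / rs V E L0 w)))) (\<lambda>b.
         if b then return_spmf (w, acc + q) else reach_reject V E L0 rs0 (acc + q)))"

(* Sampling phase: output (node, number of queries); nbar = |L0| + |L1| + lbar.
   With prob |L0|/nbar uniform in L0, with prob |L1|/nbar uniform in L1 (no queries),
   otherwise Reach with rejection. *)
definition sample :: "nat set \<Rightarrow> (nat \<times> nat) set \<Rightarrow> nat set \<Rightarrow> real \<Rightarrow> real \<Rightarrow> (nat \<times> nat) spmf" where
  "sample V E L0 lbar rs0 =
     (let n0 = real (card L0); n1 = real (card (layer1 E L0)); nbar = n0 + n1 + lbar in
      bind_spmf (spmf_of_pmf (bernoulli_pmf (n0 / nbar))) (\<lambda>b0.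
        if b0 then map_spmf (\<lambda>x. (x, 0)) (spmf_of_pmf (pmf_of_set L0))
        else bind_spmf (spmf_of_pmf (bernoulli_pmf (n1 / (n1 + lbar)))) (\<lambda>b1.
          if b1 then map_spmf (\<lambda>x. (x, 0)) (spmf_of_pmf (pmf_of_set (layer1 E L0)))
          else reach_reject V E L0 rs0 0)))"

definition w_param :: "nat set \<Rightarrow> (nat \<times> nat) set \<Rightarrow> nat set \<Rightarrow> real" where
  "w_param V E L0 = (\<integral>v. real (card (comp_ge2 V E L0 v)) \<partial>measure_spmf (map_spmf fst (reach V E L0 0)))"

definition expected_queries :: "(nat \<times> nat) spmf \<Rightarrow> ennreal" where
  "expected_queries p = (\<integral>\<^sup>+ xq. ennreal (real (snd xq)) \<partial>measure_spmf p)"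

end

theory Submission
  imports Defs
begin

text \<open>
  Reach is a repeat-until-success loop. An attempt succeeds with probability \<open>\<alpha>\<close>; a failed
  attempt costs one query, and a successful attempt landing in a component \<open>C\<close> costs at most
  \<open>1 + (1 + d) |C|\<close> queries: the BFS of \<open>C\<close>, plus one query for each of the at most
  \<open>d |C|\<close> neighbours of \<open>C\<close> in \<open>L\<^sub>1\<close>, which determine the reachability score. By Wald's
  identity the expected cost of the loop is that of the failed attempts, \<open>(1 - \<alpha>) / \<alpha>\<close>, plus
  that of the successful one, so Reach costs at most \<open>1 / \<alpha> + (1 + d) w\<close> queries.
  The reachability score is constant on components, and every output of Reach shares its
  component with a node of \<open>L\<^sub>2\<close>, so it is accepted with probability at least \<open>1 / c\<close>; the
  same identity for the rejection loop multiplies the cost by \<open>c\<close>. Finally \<open>1 + d \<le> 2 d\<close>,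
  because the component reached by a successful attempt has a boundary edge.
\<close>

section \<open>Integrals over subprobability distributions\<close>

lemma nn_integral_bind_spmf:
  "(\<integral>\<^sup>+x. h x \<partial>measure_spmf (p \<bind> f)) = (\<integral>\<^sup>+y. (\<integral>\<^sup>+x. h x \<partial>measure_spmf (f y)) \<partial>measure_spmf p)"
  unfolding measure_spmf_bind
  by (subst nn_integral_bind[where B="count_space UNIV"])
    (auto simp: measurable_spmf_measure1 o_def intro!: measurable_comp[OF _ measurable_measure_spmf])

lemma nn_integral_bind_pmf_le:
  fixes M :: "'a pmf" and f :: "'a \<Rightarrow> 'b spmf"
  assumes "\<And>x. (\<integral>\<^sup>+y. h y \<partial>measure_spmf (f x)) \<le> B"
  shows "(\<integral>\<^sup>+y. h y \<partial>measure_spmf (bind_pmf M f)) \<le> B"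
proof -
  have "(\<integral>\<^sup>+y. h y \<partial>measure_spmf (bind_pmf M f)) \<le> (\<integral>\<^sup>+x. B \<partial>measure_pmf M)"
    unfolding bind_spmf_of_pmf[symmetric] nn_integral_bind_spmf measure_spmf_spmf_of_pmf
    by (intro nn_integral_mono assms)
  then show ?thesis
    by (simp add: measure_pmf.emeasure_space_1)
qed

lemma set_spmf_nonempty_if_lossless: "lossless_spmf p \<Longrightarrow> set_spmf p \<noteq> {}"
  using measure_spmf_zero_iff[of p UNIV] by (auto simp: lossless_spmf_def weight_spmf_def)

lemma nn_integral_lub_spmf:
  fixes Y :: "'a::countable spmf set"
  assumes chain: "Complete_Partial_Order.chain (ord_spmf (=)) Y" and "Y \<noteq> {}"
  shows "(\<integral>\<^sup>+x. h x \<partial>measure_spmf (lub_spmf Y)) = (SUP p\<in>Y. \<integral>\<^sup>+x. h x \<partial>measure_spmf p)"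
proof -
  have "(\<integral>\<^sup>+x. h x \<partial>measure_spmf (lub_spmf Y))
      = (\<integral>\<^sup>+x. (SUP p\<in>Y. ennreal (spmf p x) * h x) \<partial>count_space UNIV)"
    by (simp add: nn_integral_measure_spmf ennreal_spmf_lub_spmf[OF chain \<open>Y \<noteq> {}\<close>]
        SUP_mult_right_ennreal \<open>Y \<noteq> {}\<close>)
  also have "\<dots> = (SUP p\<in>Y. \<integral>\<^sup>+x. ennreal (spmf p x) * h x \<partial>count_space UNIV)"
  proof (rule nn_integral_monotone_convergence_SUP_countable[OF \<open>Y \<noteq> {}\<close>])
    show "Complete_Partial_Order.chain (\<le>) ((\<lambda>p x. ennreal (spmf p x) * h x) ` Y)"
      using chain by (rule chain_imageI)
        (auto simp: le_fun_def intro!: mult_right_mono dest: ord_spmf_eq_leD)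
  qed simp
  finally show ?thesis
    by (simp add: nn_integral_measure_spmf)
qed

lemma mcont_nn_integral_spmf:
  fixes h :: "'a::countable \<Rightarrow> ennreal"
  shows "mcont lub_spmf (ord_spmf (=)) Sup (\<le>) (\<lambda>p. \<integral>\<^sup>+x. h x \<partial>measure_spmf p)"
proof (rule mcontI)
  show "monotone (ord_spmf (=)) (\<le>) (\<lambda>p. \<integral>\<^sup>+x. h x \<partial>measure_spmf p)"
    by (rule monotoneI)
      (auto simp: nn_integral_measure_spmf intro!: nn_integral_mono mult_right_mono dest: ord_spmf_eq_leD)
  show "cont lub_spmf (ord_spmf (=)) Sup (\<le>) (\<lambda>p. \<integral>\<^sup>+x. h x \<partial>measure_spmf p)"
    by (rule contI) (simp add: nn_integral_lub_spmf image_image)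
qed

lemmas mcont2mcont_nn_integral_spmf = mcont_nn_integral_spmf[THEN mcont2mcont]

section \<open>Retry loops\<close>

text \<open>Reach and the rejection loop of Sample both unfold to this form.\<close>

definition retry_step :: "('a option \<times> nat) spmf \<Rightarrow> (nat \<Rightarrow> ('a \<times> nat) spmf) \<Rightarrow> nat \<Rightarrow> ('a \<times> nat) spmf" where
  "retry_step S f acc =
     S \<bind> (\<lambda>(r, q). case r of None \<Rightarrow> f (acc + q) | Some w \<Rightarrow> return_spmf (w, acc + q))"

text \<open>Wald's identity as a loop invariant: the charge \<open>T + h w\<close> collected by the successful
  trial pays for all trials.\<close>

lemma retry_step_cost:
  fixes S :: "('a::countable option \<times> nat) spmf" and T :: ennreal and h :: "'a \<Rightarrow> ennreal"
  assumes IH: "\<And>acc. (\<integral>\<^sup>+x. real (snd x) \<partial>measure_spmf (f acc))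
                      \<le> (\<integral>\<^sup>+x. (real acc + T + h (fst x)) \<partial>measure_spmf (f acc))"
    and wald: "(\<integral>\<^sup>+x. real (snd x) \<partial>measure_spmf S)
               \<le> (\<integral>\<^sup>+x. (case fst x of None \<Rightarrow> 0 | Some w \<Rightarrow> T + h w) \<partial>measure_spmf S)"
    and finite: "(\<integral>\<^sup>+x. real (snd x) \<partial>measure_spmf S) \<noteq> \<top>"
  shows "(\<integral>\<^sup>+x. real (snd x) \<partial>measure_spmf (retry_step S f acc))
         \<le> (\<integral>\<^sup>+x. (real acc + T + h (fst x)) \<partial>measure_spmf (retry_step S f acc))"
proof -
  define k where "k = (\<lambda>(r, q). case r of None \<Rightarrow> f (acc + q) | Some w \<Rightarrow> return_spmf (w, acc + q))"
  define charge where "charge x = (case fst x of None \<Rightarrow> 0 | Some w \<Rightarrow> T + h w)" for x :: "'a option \<times> nat"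
  define \<Phi> where "\<Phi> y = (\<integral>\<^sup>+x. real (snd x) \<partial>measure_spmf (k y))" for y
  define \<Psi> where "\<Psi> y = (\<integral>\<^sup>+x. (real acc + T + h (fst x)) \<partial>measure_spmf (k y))" for y
  have pointwise: "\<Phi> y + charge y \<le> \<Psi> y + real (snd y)" for y
  proof (cases y)
    case (Pair r q)
    show ?thesis
    proof (cases r)
      case None
      let ?M = "measure_spmf (f (acc + q))"
      have "\<Phi> y \<le> (\<integral>\<^sup>+x. ((real acc + T + h (fst x)) + real q) \<partial>?M)"
        using IH[of "acc + q"] by (simp add: \<Phi>_def k_def Pair None add_ac)
      also have "\<dots> = \<Psi> y + real q * emeasure ?M (space ?M)"
        by (subst nn_integral_add) (auto simp: \<Psi>_def k_def Pair None)
      also have "\<dots> \<le> \<Psi> y + ennreal (real q) * 1"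
        by (intro add_left_mono mult_left_mono measure_spmf.emeasure_space_le_1) simp
      finally show ?thesis by (simp add: charge_def Pair None)
    next
      case (Some w)
      then show ?thesis
        by (simp add: \<Phi>_def \<Psi>_def charge_def k_def Pair measure_spmf_return_spmf
            nn_integral_return add_ac)
    qed
  qed
  have "(\<integral>\<^sup>+y. \<Phi> y \<partial>measure_spmf S) + (\<integral>\<^sup>+y. real (snd y) \<partial>measure_spmf S)
      \<le> (\<integral>\<^sup>+y. \<Phi> y \<partial>measure_spmf S) + (\<integral>\<^sup>+y. charge y \<partial>measure_spmf S)"
    using wald by (simp add: charge_def add_left_mono)
  also have "\<dots> = (\<integral>\<^sup>+y. (\<Phi> y + charge y) \<partial>measure_spmf S)"
    by (simp add: nn_integral_add)
  also have "\<dots> \<le> (\<integral>\<^sup>+y. (\<Psi> y + real (snd y)) \<partial>measure_spmf S)"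
    by (intro nn_integral_mono pointwise)
  also have "\<dots> = (\<integral>\<^sup>+y. \<Psi> y \<partial>measure_spmf S) + (\<integral>\<^sup>+y. real (snd y) \<partial>measure_spmf S)"
    by (simp add: nn_integral_add)
  finally have "(\<integral>\<^sup>+y. \<Phi> y \<partial>measure_spmf S) \<le> (\<integral>\<^sup>+y. \<Psi> y \<partial>measure_spmf S)"
    using finite by (simp add: add.commute[of _ "\<integral>\<^sup>+y. real (snd y) \<partial>measure_spmf S"]
        ennreal_add_left_cancel_le)
  then show ?thesis
    by (simp add: retry_step_def nn_integral_bind_spmf \<Phi>_def \<Psi>_def k_def)
qed

lemma lossless_retry:
  assumes unfold: "\<And>acc. f acc = retry_step S f acc" and "lossless_spmf S"
    and "0 < s" and success: "s \<le> measure (measure_spmf S) {x. fst x \<noteq> None}"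
  shows "lossless_spmf (f acc)"
proof -
  have "s \<le> 1"
    using success measure_spmf.subprob_measure_le_1 order_trans by blast
  have weight: "1 - (1 - s) ^ n \<le> weight_spmf (f acc)" for n acc
  proof (induction n arbitrary: acc)
    case (Suc n)
    let ?k = "\<lambda>(r, q). case r of None \<Rightarrow> f (acc + q) | Some w \<Rightarrow> return_spmf (w, acc + q)"
    define m where "m = 1 - (1 - s) ^ n"
    have "0 \<le> m" "m \<le> 1"
      using \<open>0 < s\<close> \<open>s \<le> 1\<close> by (simp_all add: m_def power_le_one)
    have "1 - (1 - s) ^ Suc n = m + (1 - m) * s"
      by (simp add: m_def algebra_simps)
    also have "\<dots> \<le> m + (1 - m) * measure (measure_spmf S) {x. fst x \<noteq> None}"
      using success \<open>m \<le> 1\<close> by (simp add: mult_left_mono)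
    also have "\<dots> = (\<integral>y. m + (1 - m) * indicator {x. fst x \<noteq> None} y \<partial>measure_spmf S)"
      using \<open>lossless_spmf S\<close>
      by (subst Bochner_Integration.integral_add) (auto simp: lossless_spmf_def weight_spmf_def measure_spmf.emeasure_eq_measure)
    also have "\<dots> \<le> (\<integral>y. weight_spmf (?k y) \<partial>measure_spmf S)"
    proof (rule integral_mono)
      fix y :: "'a option \<times> nat"
      show "m + (1 - m) * indicator {x. fst x \<noteq> None} y \<le> weight_spmf (?k y)"
        using Suc.IH by (cases y; cases "fst y") (auto simp: m_def)
    qed (use \<open>0 \<le> m\<close> \<open>m \<le> 1\<close> in
          \<open>auto intro!: measure_spmf.integrable_const_bound[where B=1] weight_spmf_le_1
                split: split_indicator\<close>)
    also have "\<dots> = weight_spmf (f acc)"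
      by (simp only: unfold[of acc] retry_step_def weight_bind_spmf o_def)
    finally show ?case .
  qed simp
  have "(\<lambda>n. 1 - (1 - s) ^ n) \<longlonglongrightarrow> 1 - 0"
    using \<open>0 < s\<close> \<open>s \<le> 1\<close> by (intro tendsto_intros LIMSEQ_power_zero) simp
  then have "1 - 0 \<le> weight_spmf (f acc)"
    by (rule LIMSEQ_le_const2) (use weight in blast)
  then show ?thesis
    by (simp add: lossless_spmf_def antisym weight_spmf_le_1)
qed

lemma set_spmf_retry_step_subset:
  assumes "\<And>acc. set_spmf (f acc) \<subseteq> A \<times> UNIV" and "\<And>w q. (Some w, q) \<in> set_spmf S \<Longrightarrow> w \<in> A"
  shows "set_spmf (retry_step S f acc) \<subseteq> A \<times> UNIV"
  using assms by (fastforce simp: retry_step_def set_bind_spmf split: option.splits)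

section \<open>Rejection trials\<close>

definition accept_trial :: "('a \<times> nat) spmf \<Rightarrow> ('a \<Rightarrow> real) \<Rightarrow> ('a option \<times> nat) spmf" where
  "accept_trial R p =
     R \<bind> (\<lambda>(w, q). map_spmf (\<lambda>b. (if b then Some w else None, q)) (spmf_of_pmf (bernoulli_pmf (p w))))"

lemma bind_bernoulli_eq_retry_step:
  "R \<bind> (\<lambda>(w, q). spmf_of_pmf (bernoulli_pmf (p w)) \<bind>
          (\<lambda>b. if b then return_spmf (w, acc + q) else f (acc + q)))
   = retry_step (accept_trial R p) f acc"
  unfolding retry_step_def accept_trial_def bind_spmf_assoc case_prod_unfold bind_map_spmf o_def
  by (intro bind_spmf_cong refl) simp

lemma lossless_accept_trial: "lossless_spmf (accept_trial R p) \<longleftrightarrow> lossless_spmf R"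
  by (simp add: accept_trial_def case_prod_unfold)

lemma nn_integral_accept_trial:
  assumes "\<And>w. 0 \<le> p w" and "\<And>w. p w \<le> 1"
  shows "(\<integral>\<^sup>+x. g x \<partial>measure_spmf (accept_trial R p))
       = (\<integral>\<^sup>+y. (ennreal (p (fst y)) * g (Some (fst y), snd y)
                 + ennreal (1 - p (fst y)) * g (None, snd y)) \<partial>measure_spmf R)"
  using assms
  by (auto simp: accept_trial_def nn_integral_bind_spmf nn_integral_map_spmf case_prod_unfold
      nn_integral_measure_pmf_support[where A=UNIV] UNIV_bool mult.commute intro!: nn_integral_cong)

lemma accept_trial_cost_le_charge:
  fixes R :: "('a::countable \<times> nat) spmf"
  assumes p: "\<And>w. 0 \<le> p w" "\<And>w. p w \<le> 1" and "lossless_spmf R" and "0 < c" and "0 \<le> Q"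
    and accept: "\<And>w q. (w, q) \<in> set_spmf R \<Longrightarrow> 1 / c \<le> p w"
    and cost: "(\<integral>\<^sup>+x. real (snd x) \<partial>measure_spmf R) \<le> ennreal Q"
  shows "(\<integral>\<^sup>+x. real (snd x) \<partial>measure_spmf (accept_trial R p))
         \<le> (\<integral>\<^sup>+x. (case fst x of None \<Rightarrow> 0 | Some w \<Rightarrow> ennreal (c * Q)) \<partial>measure_spmf (accept_trial R p))"
proof -
  have accept_charge: "Q \<le> p w * (c * Q)" if "(w, q) \<in> set_spmf R" for w q
  proof -
    have "Q = 1 / c * (c * Q)"
      using \<open>0 < c\<close> by simp
    also have "\<dots> \<le> p w * (c * Q)"
      using accept[OF that] \<open>0 < c\<close> \<open>0 \<le> Q\<close> by (intro mult_right_mono) simp_all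
    finally show ?thesis .
  qed
  have "(\<integral>\<^sup>+x. real (snd x) \<partial>measure_spmf (accept_trial R p)) = (\<integral>\<^sup>+y. real (snd y) \<partial>measure_spmf R)"
    using p by (simp add: nn_integral_accept_trial distrib_right[symmetric] ennreal_plus[symmetric]
        del: ennreal_plus)
  also have "\<dots> \<le> (\<integral>\<^sup>+y. ennreal Q \<partial>measure_spmf R)"
    using cost \<open>lossless_spmf R\<close>
    by (simp add: lossless_spmf_def measure_spmf.emeasure_eq_measure weight_spmf_def)
  also have "\<dots> \<le> (\<integral>\<^sup>+y. ennreal (p (fst y) * (c * Q)) \<partial>measure_spmf R)"
    using accept_charge
    by (intro nn_integral_mono_AE) (auto simp: AE_measure_spmf_iff intro!: ennreal_leI)
  also have "\<dots> = (\<integral>\<^sup>+x. (case fst x of None \<Rightarrow> 0 | Some w \<Rightarrow> ennreal (c * Q)) \<partial>measure_spmf (accept_trial R p))"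
    using p \<open>0 < c\<close> \<open>0 \<le> Q\<close> by (simp add: nn_integral_accept_trial ennreal_mult)
  finally show ?thesis .
qed

lemma accept_trial_success_ge:
  fixes R :: "('a::countable \<times> nat) spmf"
  assumes p: "\<And>w. 0 \<le> p w" "\<And>w. p w \<le> 1" and "lossless_spmf R"
    and accept: "\<And>w q. (w, q) \<in> set_spmf R \<Longrightarrow> s \<le> p w"
  shows "s \<le> measure (measure_spmf (accept_trial R p)) {x. fst x \<noteq> None}"
proof -
  have "ennreal s = (\<integral>\<^sup>+y. ennreal s \<partial>measure_spmf R)"
    using \<open>lossless_spmf R\<close> by (simp add: lossless_spmf_def measure_spmf.emeasure_eq_measure weight_spmf_def)
  also have "\<dots> \<le> (\<integral>\<^sup>+y. ennreal (p (fst y)) \<partial>measure_spmf R)"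
    using accept by (intro nn_integral_mono_AE) (auto simp: AE_measure_spmf_iff intro!: ennreal_leI)
  also have "\<dots> = (\<integral>\<^sup>+x. indicator {x. fst x \<noteq> None} x \<partial>measure_spmf (accept_trial R p))"
    using nn_integral_accept_trial[of p, OF p, where g="indicator {x. fst x \<noteq> None}"] by simp
  also have "\<dots> = ennreal (measure (measure_spmf (accept_trial R p)) {x. fst x \<noteq> None})"
    by (simp add: measure_spmf.emeasure_eq_measure)
  finally show ?thesis
    by (auto simp: ennreal_le_iff2 intro: order_trans[OF _ measure_nonneg])
qed

lemma trial_cost_le_charge:
  fixes S :: "('a option \<times> nat) pmf" and h :: "'a \<Rightarrow> ennreal"
  assumes failure: "\<And>q. (None, q) \<in> set_pmf S \<Longrightarrow> q \<le> 1"
    and success: "\<And>w q. (Some w, q) \<in> set_pmf S \<Longrightarrow> ennreal (real q) \<le> h w"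
    and ratio: "measure_pmf.prob S {x. fst x = None} \<le> \<beta> * measure_pmf.prob S {x. fst x \<noteq> None}"
    and "0 \<le> \<beta>"
  shows "(\<integral>\<^sup>+x. real (snd x) \<partial>measure_pmf S) \<le> (\<integral>\<^sup>+x. (case fst x of None \<Rightarrow> 0 | Some w \<Rightarrow> ennreal \<beta> + h w) \<partial>measure_pmf S)"
proof -
  let ?h = "\<lambda>x. case fst x of None \<Rightarrow> 0 | Some w \<Rightarrow> h w"
  have "(\<integral>\<^sup>+x. real (snd x) \<partial>measure_pmf S) \<le> (\<integral>\<^sup>+x. (indicator {x. fst x = None} x + ?h x) \<partial>measure_pmf S)"
  proof (rule nn_integral_mono_AE, unfold AE_measure_pmf_iff, intro ballI)
    fix x assume "x \<in> set_pmf S"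
    then show "ennreal (real (snd x)) \<le> indicator {x. fst x = None} x + ?h x"
      using failure success by (cases x; cases "fst x") auto
  qed
  also have "\<dots> = emeasure (measure_pmf S) {x. fst x = None} + (\<integral>\<^sup>+x. ?h x \<partial>measure_pmf S)"
    by (simp add: nn_integral_add)
  also have "\<dots> \<le> ennreal \<beta> * emeasure (measure_pmf S) {x. fst x \<noteq> None} + (\<integral>\<^sup>+x. ?h x \<partial>measure_pmf S)"
    using ratio \<open>0 \<le> \<beta>\<close>
    by (simp add: measure_pmf.emeasure_eq_measure ennreal_mult[symmetric] ennreal_leI)
  also have "\<dots> = (\<integral>\<^sup>+x. (case fst x of None \<Rightarrow> 0 | Some w \<Rightarrow> ennreal \<beta> + h w) \<partial>measure_pmf S)"
    by (subst nn_integral_cmult_indicator[symmetric], simp, subst nn_integral_add[symmetric])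
      (auto intro!: nn_integral_cong split: option.splits)
  finally show ?thesis .
qed

section \<open>Components of \<open>G\<^sub>\<ge>\<^sub>2\<close>\<close>

lemma comp_ge2_subset:
  assumes "E \<subseteq> V \<times> V"
  shows "comp_ge2 V E L0 v \<subseteq> insert v V"
proof
  fix y assume "y \<in> comp_ge2 V E L0 v"
  then have "(v, y) \<in> (edges_ge2 V E L0)\<^sup>*"
    by (simp add: comp_ge2_def)
  then show "y \<in> insert v V"
  proof induction
    case (step y z)
    then show ?case
      using assms by (auto simp: edges_ge2_def)
  qed simp
qed

lemma finite_comp_ge2: "finite V \<Longrightarrow> E \<subseteq> V \<times> V \<Longrightarrow> finite (comp_ge2 V E L0 v)"
  by (rule finite_subset[OF comp_ge2_subset]) simp_all

lemma card_comp_ge2_le: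
  assumes "finite V" and "E \<subseteq> V \<times> V"
  shows "card (comp_ge2 V E L0 v) \<le> card V + 1"
proof -
  have "card (comp_ge2 V E L0 v) \<le> card (insert v V)"
    using assms by (intro card_mono comp_ge2_subset) simp_all
  then show ?thesis
    using assms by (simp add: card_insert_if split: if_splits)
qed

lemma comp_ge2_self: "v \<in> comp_ge2 V E L0 v"
  by (simp add: comp_ge2_def)

lemma comp_ge2_eq_iff:
  assumes "sym E"
  shows "x \<in> comp_ge2 V E L0 v \<longleftrightarrow> comp_ge2 V E L0 x = comp_ge2 V E L0 v"
proof
  have "sym ((edges_ge2 V E L0)\<^sup>*)"
    using assms by (intro sym_rtrancl) (auto simp: sym_def edges_ge2_def)
  moreover assume "x \<in> comp_ge2 V E L0 v"
  ultimately have "(x, v) \<in> (edges_ge2 V E L0)\<^sup>*" "(v, x) \<in> (edges_ge2 V E L0)\<^sup>*"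
    by (auto simp: comp_ge2_def dest: symD)
  then show "comp_ge2 V E L0 x = comp_ge2 V E L0 v"
    unfolding comp_ge2_def by (blast intro: rtrancl_trans)
qed (metis comp_ge2_self)

lemma comp_ge2_subset_layer_ge2:
  assumes "v \<in> layer_ge2 V E L0"
  shows "comp_ge2 V E L0 v \<subseteq> layer_ge2 V E L0"
proof
  fix y assume "y \<in> comp_ge2 V E L0 v"
  then have "(v, y) \<in> (edges_ge2 V E L0)\<^sup>*"
    by (simp add: comp_ge2_def)
  then show "y \<in> layer_ge2 V E L0"
    by induction (use assms in \<open>auto simp: edges_ge2_def\<close>)
qed

lemma layer2_subset_layer_ge2: "E \<subseteq> V \<times> V \<Longrightarrow> layer2 E L0 \<subseteq> layer_ge2 V E L0"
  unfolding layer2_def layer_ge2_def nbrs_def by blast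

lemma rs_cost_comp_le_boundary:
  assumes "finite E" and "v \<in> layer_ge2 V E L0"
  shows "rs_cost E L0 (comp_ge2 V E L0 v)
         \<le> card {(x, y) \<in> E. x \<in> comp_ge2 V E L0 v \<and> y \<notin> comp_ge2 V E L0 v}"
    (is "_ \<le> card ?B")
proof -
  have "finite ?B"
    using \<open>finite E\<close> by (rule finite_subset[rotated]) auto
  have "{u \<in> layer1 E L0. \<exists>y\<in>comp_ge2 V E L0 v. (y, u) \<in> E} \<subseteq> snd ` ?B"
    using comp_ge2_subset_layer_ge2[OF \<open>v \<in> layer_ge2 V E L0\<close>]
    unfolding layer_ge2_def by (force simp: image_iff)
  then have "rs_cost E L0 (comp_ge2 V E L0 v) \<le> card (snd ` ?B)"
    unfolding rs_cost_def using \<open>finite ?B\<close> by (intro card_mono finite_imageI)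
  also have "\<dots> \<le> card ?B"
    using \<open>finite ?B\<close> by (rule card_image_le)
  finally show ?thesis .
qed

section \<open>Reaching attempts\<close>

lemma finite_edges01: "finite V \<Longrightarrow> E \<subseteq> V \<times> V \<Longrightarrow> finite (edges01 E L0)"
  by (auto simp: edges01_def intro: finite_subset[of _ "V \<times> V"])

lemma set_pmf_attempt:
  assumes "finite V" and "E \<subseteq> V \<times> V" and "edges01 E L0 \<noteq> {}"
    and "(r, q) \<in> set_pmf (attempt V E L0)"
  shows "r = None \<and> q = 1 \<or>
    (\<exists>v\<in>layer2 E L0. \<exists>w\<in>comp_ge2 V E L0 v.
       r = Some w \<and> q = 1 + card (comp_ge2 V E L0 v) + rs_cost E L0 (comp_ge2 V E L0 v))"
proof -
  from assms(3,4) finite_edges01[OF assms(1,2)] obtain x u where "(x, u) \<in> edges01 E L0"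
    and rq: "(r, q) \<in> set_pmf (if nbrs E u \<inter> layer2 E L0 = {} then return_pmf (None, 1)
          else do { v \<leftarrow> pmf_of_set (nbrs E u \<inter> layer2 E L0);
                    w \<leftarrow> pmf_of_set (comp_ge2 V E L0 v);
                    return_pmf (Some w, 1 + card (comp_ge2 V E L0 v)
                                           + rs_cost E L0 (comp_ge2 V E L0 v)) })"
    unfolding attempt_def by (auto simp: set_pmf_of_set)
  have "finite (nbrs E u \<inter> layer2 E L0)"
    using assms(1,2) by (auto simp: nbrs_def intro: finite_subset[of _ V])
  moreover have "comp_ge2 V E L0 v \<noteq> {}" for v
    using comp_ge2_self by blast
  ultimately show ?thesis
    using rq finite_comp_ge2[OF assms(1,2)] by (auto simp: set_pmf_of_set split: if_splits)
qed

text \<open>The BFS of the component costs \<open>|C|\<close> queries and the reachability score needs at most one query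
  per edge leaving \<open>C\<close>.\<close>

lemma attempt_success_queries:
  assumes "finite V" and "E \<subseteq> V \<times> V" and "sym E" and "edges01 E L0 \<noteq> {}"
    and boundary: "\<forall>C\<in>components_ge2 V E L0. card {(x, y) \<in> E. x \<in> C \<and> y \<notin> C} \<le> d * card C"
    and "(Some w, q) \<in> set_pmf (attempt V E L0)"
  shows "\<exists>v\<in>layer2 E L0. comp_ge2 V E L0 w = comp_ge2 V E L0 v
           \<and> q \<le> 1 + (1 + d) * card (comp_ge2 V E L0 w)"
proof -
  obtain v where v: "v \<in> layer2 E L0" and "w \<in> comp_ge2 V E L0 v"
    and q: "q = 1 + card (comp_ge2 V E L0 v) + rs_cost E L0 (comp_ge2 V E L0 v)"
    using set_pmf_attempt[OF assms(1,2,4,6)] by auto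
  then have comp_eq: "comp_ge2 V E L0 w = comp_ge2 V E L0 v"
    using comp_ge2_eq_iff[OF \<open>sym E\<close>] by blast
  have "v \<in> layer_ge2 V E L0"
    using v layer2_subset_layer_ge2[OF \<open>E \<subseteq> V \<times> V\<close>] by blast
  moreover have "finite E"
    using assms(1,2) finite_subset by blast
  ultimately have "rs_cost E L0 (comp_ge2 V E L0 v) \<le> d * card (comp_ge2 V E L0 v)"
    using rs_cost_comp_le_boundary boundary by (fastforce simp: components_ge2_def intro: order_trans)
  then show ?thesis
    using v q comp_eq by auto
qed

lemma prob_attempt_success:
  assumes "finite V" and "E \<subseteq> V \<times> V" and "edges01 E L0 \<noteq> {}"
  shows "measure_pmf.prob (attempt V E L0) {x. fst x \<noteq> None} = alpha E L0"
proof -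
  let ?U = "pmf_of_set (edges01 E L0)"
  let ?success = "\<lambda>(x::nat, u). nbrs E u \<inter> layer2 E L0 \<noteq> {}"
  have "map_pmf (\<lambda>x. fst x \<noteq> None) (attempt V E L0) = ?U \<bind> (\<lambda>y. return_pmf (?success y))"
    unfolding attempt_def map_bind_pmf
  proof (rule bind_pmf_cong[OF refl], goal_cases)
    case (1 y)
    show ?case
      by (cases y) (simp add: map_bind_pmf bind_pmf_const)
  qed
  then have map_success: "map_pmf (\<lambda>x. fst x \<noteq> None) (attempt V E L0) = map_pmf ?success ?U"
    by (simp add: map_pmf_def)
  have "measure_pmf.prob (attempt V E L0) {x. fst x \<noteq> None}
      = measure_pmf.prob (map_pmf (\<lambda>x. fst x \<noteq> None) (attempt V E L0)) {True}"
    by (simp add: measure_map_pmf vimage_def)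
  also have "\<dots> = measure_pmf.prob ?U (?success -` {True})"
    by (simp only: map_success measure_map_pmf)
  also have "\<dots> = real (card (edges01 E L0 \<inter> ?success -` {True})) / real (card (edges01 E L0))"
    using assms(3) finite_edges01[OF assms(1,2)] by (rule measure_pmf_of_set)
  also have "edges01 E L0 \<inter> ?success -` {True} = {(x, u) \<in> edges01 E L0. nbrs E u \<inter> layer2 E L0 \<noteq> {}}"
    by auto
  finally show ?thesis
    by (simp add: alpha_def)
qed

lemma edges01_nonempty: "alpha E L0 > 0 \<Longrightarrow> edges01 E L0 \<noteq> {}"
  by (auto simp: alpha_def)

lemma alpha_le_1: "finite V \<Longrightarrow> E \<subseteq> V \<times> V \<Longrightarrow> alpha E L0 > 0 \<Longrightarrow> alpha E L0 \<le> 1"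
  by (metis edges01_nonempty measure_pmf.prob_le_1 prob_attempt_success)

lemma pmf_fst_attempt_Some:
  "pmf (map_pmf fst (attempt V E L0)) (Some x) =
     measure_pmf.expectation (pmf_of_set (edges01 E L0)) (\<lambda>(x0, u).
       if nbrs E u \<inter> layer2 E L0 = {} then 0
       else pmf (pmf_of_set (nbrs E u \<inter> layer2 E L0) \<bind> (\<lambda>v. pmf_of_set (comp_ge2 V E L0 v))) x)"
  unfolding attempt_def map_bind_pmf pmf_bind
proof (rule Bochner_Integration.integral_cong[OF refl], goal_cases)
  case (1 y)
  have "map_pmf fst (N \<bind> (\<lambda>v. C v \<bind> (\<lambda>w. return_pmf (Some w, k v)))) = map_pmf Some (N \<bind> C)"
    for N :: "nat pmf" and C :: "nat \<Rightarrow> nat pmf" and k :: "nat \<Rightarrow> nat"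
    by (simp only: map_pmf_def bind_assoc_pmf bind_return_pmf fst_conv)
  then show ?case
    by (cases y) (simp add: pmf_map_inj' pmf_bind)
qed

lemma rs_eq_if_comp_ge2_eq:
  assumes "finite V" and "E \<subseteq> V \<times> V" and "sym E"
    and "comp_ge2 V E L0 x = comp_ge2 V E L0 y"
  shows "rs V E L0 x = rs V E L0 y"
proof -
  have same_pmf: "pmf (pmf_of_set (comp_ge2 V E L0 v)) x = pmf (pmf_of_set (comp_ge2 V E L0 v)) y" for v
  proof -
    have "x \<in> comp_ge2 V E L0 v \<longleftrightarrow> y \<in> comp_ge2 V E L0 v"
      using assms(4) comp_ge2_eq_iff[OF \<open>sym E\<close>] by metis
    moreover have "comp_ge2 V E L0 v \<noteq> {}"
      using comp_ge2_self by blast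
    ultimately show ?thesis
      using finite_comp_ge2[OF assms(1,2)] by (simp add: pmf_of_set indicator_def)
  qed
  then show ?thesis
    by (simp only: rs_def pmf_fst_attempt_Some pmf_bind same_pmf)
qed

lemma boundary_factor_ge_1:
  assumes "finite V" and "E \<subseteq> V \<times> V" and "sym E" and "alpha E L0 > 0"
    and boundary: "\<forall>C\<in>components_ge2 V E L0. card {(x, y) \<in> E. x \<in> C \<and> y \<notin> C} \<le> d * card C"
  shows "1 \<le> d"
proof -
  have "{(x, u) \<in> edges01 E L0. nbrs E u \<inter> layer2 E L0 \<noteq> {}} \<noteq> {}"
  proof
    assume none: "{(x, u) \<in> edges01 E L0. nbrs E u \<inter> layer2 E L0 \<noteq> {}} = {}"
    show False
      using \<open>alpha E L0 > 0\<close> unfolding alpha_def none by simp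
  qed
  then obtain x u where "(x, u) \<in> edges01 E L0" and "nbrs E u \<inter> layer2 E L0 \<noteq> {}"
    by blast
  then obtain v where v: "v \<in> layer2 E L0" and u: "u \<in> layer1 E L0" and "(v, u) \<in> E"
    using \<open>sym E\<close> by (auto simp: edges01_def nbrs_def dest: symD)
  have "v \<in> layer_ge2 V E L0"
    using v layer2_subset_layer_ge2[OF \<open>E \<subseteq> V \<times> V\<close>] by blast
  have "finite E"
    using assms(1,2) finite_subset by blast
  have "finite {u \<in> layer1 E L0. \<exists>y\<in>comp_ge2 V E L0 v. (y, u) \<in> E}"
    using \<open>finite E\<close> by (rule finite_subset[rotated, OF finite_imageI[of _ snd]]) force
  then have "1 \<le> rs_cost E L0 (comp_ge2 V E L0 v)"
    unfolding rs_cost_def using u \<open>(v, u) \<in> E\<close> comp_ge2_self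
    by (metis (mono_tags, lifting) One_nat_def Suc_leI card_gt_0_iff empty_iff mem_Collect_eq)
  also have "\<dots> \<le> d * card (comp_ge2 V E L0 v)"
    using rs_cost_comp_le_boundary[OF \<open>finite E\<close> \<open>v \<in> layer_ge2 V E L0\<close>] boundary
      \<open>v \<in> layer_ge2 V E L0\<close> by (fastforce simp: components_ge2_def)
  finally show ?thesis
    by (cases d) simp_all
qed

section \<open>Reach and the sampling phase\<close>

lemma reach_eq_retry_step: "reach V E L0 acc = retry_step (spmf_of_pmf (attempt V E L0)) (reach V E L0) acc"
  by (subst reach.simps) (simp only: retry_step_def)

lemma reach_queries_invariant:
  fixes T :: ennreal and h :: "nat \<Rightarrow> ennreal"
  assumes wald: "(\<integral>\<^sup>+x. real (snd x) \<partial>measure_pmf (attempt V E L0))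
      \<le> (\<integral>\<^sup>+x. (case fst x of None \<Rightarrow> 0 | Some w \<Rightarrow> T + h w) \<partial>measure_pmf (attempt V E L0))"
    and finite: "(\<integral>\<^sup>+x. real (snd x) \<partial>measure_pmf (attempt V E L0)) \<noteq> \<top>"
  shows "(\<integral>\<^sup>+x. real (snd x) \<partial>measure_spmf (reach V E L0 acc))
         \<le> (\<integral>\<^sup>+x. (real acc + T + h (fst x)) \<partial>measure_spmf (reach V E L0 acc))"
proof -
  have "\<forall>acc. (\<integral>\<^sup>+x. real (snd x) \<partial>measure_spmf (reach V E L0 acc))
         \<le> (\<integral>\<^sup>+x. (real acc + T + h (fst x)) \<partial>measure_spmf (reach V E L0 acc))"
  proof (induction rule: reach.fixp_induct)
    case 1
    show ?case
      unfolding curry_conv by (intro admissible_all admissible_leI[OF complete_lattice_ccpo']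
          mcont2mcont_nn_integral_spmf[OF mcont_call])
  next
    case (3 f)
    show ?case
      using retry_step_cost[of "f V E L0", OF 3[rule_format] wald[folded measure_spmf_spmf_of_pmf]
          finite[folded measure_spmf_spmf_of_pmf]]
      unfolding retry_step_def by blast
  qed simp
  then show ?thesis ..
qed

lemma set_spmf_reach:
  "set_spmf (reach V E L0 acc) \<subseteq> {w. \<exists>q. (Some w, q) \<in> set_pmf (attempt V E L0)} \<times> UNIV"
proof -
  have "\<forall>acc. set_spmf (reach V E L0 acc) \<subseteq> {w. \<exists>q. (Some w, q) \<in> set_pmf (attempt V E L0)} \<times> UNIV"
  proof (induction rule: reach.fixp_induct)
    case 1
    show ?case
      by simp
  next
    case (3 f)
    show ?case
      using set_spmf_retry_step_subset[of "f V E L0" _ "spmf_of_pmf (attempt V E L0)", OF 3[rule_format]]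
      unfolding retry_step_def by auto
  qed simp
  then show ?thesis ..
qed

lemma lossless_reach:
  assumes "finite V" and "E \<subseteq> V \<times> V" and "alpha E L0 > 0"
  shows "lossless_spmf (reach V E L0 acc)"
  using prob_attempt_success[OF assms(1,2) edges01_nonempty[OF assms(3)]]
  by (intro lossless_retry[OF reach_eq_retry_step _ \<open>alpha E L0 > 0\<close>]) simp_all

lemma attempt_queries_le_charge:
  assumes "finite V" and "E \<subseteq> V \<times> V" and "sym E" and "alpha E L0 > 0"
    and boundary: "\<forall>C\<in>components_ge2 V E L0. card {(x, y) \<in> E. x \<in> C \<and> y \<notin> C} \<le> d * card C"
  shows "(\<integral>\<^sup>+x. real (snd x) \<partial>measure_pmf (attempt V E L0))
    \<le> (\<integral>\<^sup>+x. (case fst x of None \<Rightarrow> 0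
              | Some w \<Rightarrow> ennreal (1 / alpha E L0 - 1)
                          + ennreal (1 + (1 + real d) * real (card (comp_ge2 V E L0 w))))
         \<partial>measure_pmf (attempt V E L0))"
proof (rule trial_cost_le_charge)
  let ?A = "attempt V E L0"
  have "edges01 E L0 \<noteq> {}"
    using \<open>alpha E L0 > 0\<close> by (rule edges01_nonempty)
  show "q \<le> 1" if "(None, q) \<in> set_pmf ?A" for q
    using set_pmf_attempt[OF assms(1,2) \<open>edges01 E L0 \<noteq> {}\<close> that] by simp
  show "ennreal (real q) \<le> ennreal (1 + (1 + real d) * real (card (comp_ge2 V E L0 w)))"
    if "(Some w, q) \<in> set_pmf ?A" for w q
  proof (rule ennreal_leI)
    have "q \<le> 1 + (1 + d) * card (comp_ge2 V E L0 w)"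
      using attempt_success_queries[OF assms(1-3) \<open>edges01 E L0 \<noteq> {}\<close> boundary that] by blast
    then have "real q \<le> real (1 + (1 + d) * card (comp_ge2 V E L0 w))"
      by (rule of_nat_mono)
    then show "real q \<le> 1 + (1 + real d) * real (card (comp_ge2 V E L0 w))"
      by (simp add: algebra_simps)
  qed
  show "0 \<le> 1 / alpha E L0 - 1"
    using alpha_le_1[OF assms(1,2,4)] \<open>alpha E L0 > 0\<close> by simp
  have "measure_pmf.prob ?A {x. fst x = None} = 1 - measure_pmf.prob ?A {x. fst x \<noteq> None}"
    by (subst measure_pmf.prob_compl[symmetric]) (auto intro: arg_cong[where f="measure_pmf.prob ?A"])
  also have "\<dots> = (1 / alpha E L0 - 1) * measure_pmf.prob ?A {x. fst x \<noteq> None}"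
    using \<open>alpha E L0 > 0\<close> unfolding prob_attempt_success[OF assms(1,2) \<open>edges01 E L0 \<noteq> {}\<close>]
    by (simp add: field_simps)
  finally show "measure_pmf.prob ?A {x. fst x = None}
      \<le> (1 / alpha E L0 - 1) * measure_pmf.prob ?A {x. fst x \<noteq> None}"
    by simp
qed

lemma w_param_eq_integral:
  "w_param V E L0 = (\<integral>x. real (card (comp_ge2 V E L0 (fst x))) \<partial>measure_spmf (reach V E L0 0))"
  unfolding w_param_def measure_map_spmf_conv_distr by (subst integral_distr) auto

lemma w_param_nonneg: "0 \<le> w_param V E L0"
  by (simp add: w_param_def)

lemma nn_integral_reach_comp_size:
  assumes "finite V" and "E \<subseteq> V \<times> V" and "alpha E L0 > 0" and "0 \<le> a" and "0 \<le> b"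
  shows "(\<integral>\<^sup>+x. ennreal (a + b * real (card (comp_ge2 V E L0 (fst x)))) \<partial>measure_spmf (reach V E L0 0))
         = ennreal (a + b * w_param V E L0)"
proof -
  let ?R = "reach V E L0 0" and ?size = "\<lambda>x. real (card (comp_ge2 V E L0 (fst x)))"
  have "lossless_spmf ?R"
    using assms(1-3) by (rule lossless_reach)
  have "real (card (comp_ge2 V E L0 w)) \<le> real (card V + 1)" for w
    using card_comp_ge2_le[OF assms(1,2)] by (rule of_nat_mono)
  then have "integrable (measure_spmf ?R) ?size"
    by (intro measure_spmf.integrable_const_bound[where B="real (card V + 1)"]) auto
  then have "(\<integral>\<^sup>+x. ennreal (a + b * ?size x) \<partial>measure_spmf ?R) = ennreal (\<integral>x. a + b * ?size x \<partial>measure_spmf ?R)"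
    using assms(4,5) by (intro nn_integral_eq_integral) auto
  also have "(\<integral>x. a + b * ?size x \<partial>measure_spmf ?R) = a + b * w_param V E L0"
    using \<open>integrable (measure_spmf ?R) ?size\<close> \<open>lossless_spmf ?R\<close>
    by (simp add: w_param_eq_integral lossless_spmf_def weight_spmf_def)
  finally show ?thesis .
qed

lemma reach_queries_le:
  assumes "finite V" and "E \<subseteq> V \<times> V" and "sym E" and "alpha E L0 > 0"
    and boundary: "\<forall>C\<in>components_ge2 V E L0. card {(x, y) \<in> E. x \<in> C \<and> y \<notin> C} \<le> d * card C"
  shows "expected_queries (reach V E L0 0) \<le> ennreal (1 / alpha E L0 + (1 + real d) * w_param V E L0)"
proof -
  let ?A = "attempt V E L0"
  let ?size = "\<lambda>w. 1 + (1 + real d) * real (card (comp_ge2 V E L0 w))"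
  define \<beta> where "\<beta> = 1 / alpha E L0 - 1"
  have "0 \<le> \<beta>"
    using alpha_le_1[OF assms(1,2,4)] \<open>alpha E L0 > 0\<close> by (simp add: \<beta>_def)
  have size_le: "?size w \<le> 1 + (1 + real d) * real (card V + 1)" for w
    using card_comp_ge2_le[OF assms(1,2)] by (intro add_left_mono mult_left_mono of_nat_mono) simp_all
  note wald = attempt_queries_le_charge[OF assms, folded \<beta>_def]
  also have "(\<integral>\<^sup>+x. (case fst x of None \<Rightarrow> 0 | Some w \<Rightarrow> ennreal \<beta> + ennreal (?size w)) \<partial>measure_pmf ?A)
      \<le> (\<integral>\<^sup>+x. ennreal (\<beta> + (1 + (1 + real d) * real (card V + 1))) \<partial>measure_pmf ?A)"
    using size_le \<open>0 \<le> \<beta>\<close>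
    by (intro nn_integral_mono) (auto split: option.split simp flip: ennreal_plus intro!: ennreal_leI)
  finally have finite: "(\<integral>\<^sup>+x. real (snd x) \<partial>measure_pmf ?A) \<noteq> \<top>"
    by (auto simp: measure_pmf.emeasure_space_1 top_unique)
  have "expected_queries (reach V E L0 0)
      \<le> (\<integral>\<^sup>+x. ennreal ((\<beta> + 1) + (1 + real d) * real (card (comp_ge2 V E L0 (fst x))))
           \<partial>measure_spmf (reach V E L0 0))"
    using reach_queries_invariant[OF wald finite, of 0] \<open>0 \<le> \<beta>\<close>
    by (simp add: expected_queries_def ennreal_plus[symmetric] add.assoc del: ennreal_plus)
  also have "\<dots> = ennreal ((\<beta> + 1) + (1 + real d) * w_param V E L0)"
    using \<open>0 \<le> \<beta>\<close> by (intro nn_integral_reach_comp_size[OF assms(1,2,4)]) simp_all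
  finally show ?thesis
    by (simp add: \<beta>_def)
qed

text \<open>An output of Reach lies in the support of an attempt, hence has positive score, and it
  shares its component, hence its score, with a node of \<open>L\<^sub>2\<close>.\<close>

lemma reach_output_rs_bounds:
  assumes "finite V" and "E \<subseteq> V \<times> V" and "sym E" and "alpha E L0 > 0"
    and rs_le: "\<forall>v\<in>layer2 E L0. rs V E L0 v \<le> c * rs0"
    and "(w, q) \<in> set_spmf (reach V E L0 acc)"
  shows "0 < rs V E L0 w \<and> rs V E L0 w \<le> c * rs0"
proof
  have "edges01 E L0 \<noteq> {}"
    using \<open>alpha E L0 > 0\<close> by (rule edges01_nonempty)
  obtain q' where attempt_out: "(Some w, q') \<in> set_pmf (attempt V E L0)"
    using set_spmf_reach assms(6) by blast
  have "0 < dplus E L0"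
    using \<open>edges01 E L0 \<noteq> {}\<close> finite_edges01[OF assms(1,2)] by (simp add: dplus_def card_gt_0_iff)
  moreover have "Some w \<in> set_pmf (map_pmf fst (attempt V E L0))"
    unfolding set_map_pmf using attempt_out by (rule rev_image_eqI) simp
  ultimately show "0 < rs V E L0 w"
    by (simp add: rs_def pmf_positive)
  obtain v where "v \<in> layer2 E L0" and "w \<in> comp_ge2 V E L0 v"
    using set_pmf_attempt[OF assms(1,2) \<open>edges01 E L0 \<noteq> {}\<close> attempt_out] by auto
  then have "rs V E L0 w = rs V E L0 v"
    using comp_ge2_eq_iff[OF \<open>sym E\<close>] by (intro rs_eq_if_comp_ge2_eq[OF assms(1-3)]) blast
  then show "rs V E L0 w \<le> c * rs0"
    using rs_le \<open>v \<in> layer2 E L0\<close> by simp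
qed

lemma reach_reject_eq_retry_step:
  "reach_reject V E L0 rs0 acc
   = retry_step (accept_trial (reach V E L0 0) (\<lambda>w. min 1 (rs0 / rs V E L0 w))) (reach_reject V E L0 rs0) acc"
  by (subst reach_reject.simps) (rule bind_bernoulli_eq_retry_step[where f="reach_reject V E L0 rs0"])

lemma acceptance_prob_bounds:
  assumes "0 \<le> rs0"
  shows "0 \<le> min 1 (rs0 / rs V E L0 w)" and "min 1 (rs0 / rs V E L0 w) \<le> 1"
  using assms by (simp_all add: rs_def)

lemma lossless_reach_reject:
  assumes "lossless_spmf (reach V E L0 0)" and "0 \<le> rs0" and "0 < c"
    and accept: "\<And>w q. (w, q) \<in> set_spmf (reach V E L0 0) \<Longrightarrow> 1 / c \<le> min 1 (rs0 / rs V E L0 w)"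
  shows "lossless_spmf (reach_reject V E L0 rs0 acc)"
proof (rule lossless_retry[OF reach_reject_eq_retry_step])
  show "lossless_spmf (accept_trial (reach V E L0 0) (\<lambda>w. min 1 (rs0 / rs V E L0 w)))"
    using assms(1) by (simp add: lossless_accept_trial)
  show "1 / c \<le> measure (measure_spmf (accept_trial (reach V E L0 0) (\<lambda>w. min 1 (rs0 / rs V E L0 w))))
      {x. fst x \<noteq> None}"
    using acceptance_prob_bounds[OF \<open>0 \<le> rs0\<close>] assms(1) accept by (rule accept_trial_success_ge)
qed (use \<open>0 < c\<close> in simp)

lemma reach_reject_queries_invariant:
  fixes V E L0 and rs0 :: real and T :: ennreal
  defines "S \<equiv> accept_trial (reach V E L0 0) (\<lambda>w. min 1 (rs0 / rs V E L0 w))"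
  assumes wald: "(\<integral>\<^sup>+x. real (snd x) \<partial>measure_spmf S)
      \<le> (\<integral>\<^sup>+x. (case fst x of None \<Rightarrow> 0 | Some w \<Rightarrow> T) \<partial>measure_spmf S)"
    and finite: "(\<integral>\<^sup>+x. real (snd x) \<partial>measure_spmf S) \<noteq> \<top>"
  shows "(\<integral>\<^sup>+x. real (snd x) \<partial>measure_spmf (reach_reject V E L0 rs0 acc))
         \<le> (\<integral>\<^sup>+x. (real acc + T) \<partial>measure_spmf (reach_reject V E L0 rs0 acc))"
proof -
  have "\<forall>acc. (\<integral>\<^sup>+x. real (snd x) \<partial>measure_spmf (reach_reject V E L0 rs0 acc))
         \<le> (\<integral>\<^sup>+x. (real acc + T) \<partial>measure_spmf (reach_reject V E L0 rs0 acc))"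
  proof (induction rule: reach_reject.fixp_induct)
    case 1
    show ?case
      unfolding curry_conv by (intro admissible_all admissible_leI[OF complete_lattice_ccpo']
          mcont2mcont_nn_integral_spmf[OF mcont_call])
  next
    case (3 f)
    have "(\<integral>\<^sup>+x. real (snd x) \<partial>measure_spmf (retry_step S (f V E L0 rs0) acc))
        \<le> (\<integral>\<^sup>+x. (real acc + T) \<partial>measure_spmf (retry_step S (f V E L0 rs0) acc))" for acc
      by (rule retry_step_cost[where h="\<lambda>_. 0", unfolded add_0_right, OF 3[rule_format] wald finite])
    then show ?case
      unfolding S_def
      by (simp only: bind_bernoulli_eq_retry_step[where R="reach V E L0 0" and f="f V E L0 rs0"]) blast
  qed simp
  then show ?thesis ..
qed

lemma reach_reject_queries_le:
  assumes "lossless_spmf (reach V E L0 0)" and "0 \<le> rs0" and "0 < c" and "0 \<le> Q"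
    and accept: "\<And>w q. (w, q) \<in> set_spmf (reach V E L0 0) \<Longrightarrow> 1 / c \<le> min 1 (rs0 / rs V E L0 w)"
    and reach_queries: "expected_queries (reach V E L0 0) \<le> ennreal Q"
  shows "expected_queries (reach_reject V E L0 rs0 0) \<le> ennreal (c * Q)"
proof -
  let ?S = "accept_trial (reach V E L0 0) (\<lambda>w. min 1 (rs0 / rs V E L0 w))"
  have wald: "(\<integral>\<^sup>+x. real (snd x) \<partial>measure_spmf ?S)
      \<le> (\<integral>\<^sup>+x. (case fst x of None \<Rightarrow> 0 | Some w \<Rightarrow> ennreal (c * Q)) \<partial>measure_spmf ?S)"
    using assms acceptance_prob_bounds[OF \<open>0 \<le> rs0\<close>]
    by (intro accept_trial_cost_le_charge) (simp_all add: expected_queries_def)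
  also have "\<dots> \<le> (\<integral>\<^sup>+x. ennreal (c * Q) \<partial>measure_spmf ?S)"
    by (intro nn_integral_mono) (simp split: option.split)
  also have "\<dots> \<le> ennreal (c * Q)"
    by (simp add: mult_left_le measure_spmf.emeasure_space_le_1)
  finally have "(\<integral>\<^sup>+x. real (snd x) \<partial>measure_spmf ?S) \<noteq> \<top>"
    by (auto simp: top_unique)
  then have "expected_queries (reach_reject V E L0 rs0 0)
      \<le> (\<integral>\<^sup>+x. (real 0 + ennreal (c * Q)) \<partial>measure_spmf (reach_reject V E L0 rs0 0))"
    unfolding expected_queries_def by (rule reach_reject_queries_invariant[OF wald])
  also have "\<dots> \<le> ennreal (c * Q)"
    by (simp add: mult_left_le measure_spmf.emeasure_space_le_1)
  finally show ?thesis .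
qed

lemma lossless_sample: "lossless_spmf (reach_reject V E L0 rs0 0) \<Longrightarrow> lossless_spmf (sample V E L0 lbar rs0)"
  by (simp add: sample_def Let_def)

lemma expected_queries_sample_le:
  assumes "expected_queries (reach_reject V E L0 rs0 0) \<le> B"
  shows "expected_queries (sample V E L0 lbar rs0) \<le> B"
proof -
  have no_queries: "(\<integral>\<^sup>+x. real (snd x) \<partial>measure_spmf (map_spmf (\<lambda>x. (x, 0::nat)) P)) \<le> B" for P
    by (simp add: nn_integral_map_spmf o_def)
  show ?thesis
    unfolding expected_queries_def sample_def Let_def bind_spmf_of_pmf
    using no_queries assms[unfolded expected_queries_def]
    by (intro nn_integral_bind_pmf_le) (auto intro!: nn_integral_bind_pmf_le)
qed

lemma sample_queries_le:
  assumes "finite V" and "E \<subseteq> V \<times> V" and "sym E" and "1 < c" and "alpha E L0 > 0"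
    and rs_le: "\<forall>v\<in>layer2 E L0. rs V E L0 v \<le> c * rs0"
    and boundary: "\<forall>C\<in>components_ge2 V E L0. card {(x, y) \<in> E. x \<in> C \<and> y \<notin> C} \<le> d * card C"
  shows "lossless_spmf (sample V E L0 lbar rs0)"
    and "expected_queries (sample V E L0 lbar rs0)
         \<le> ennreal (c * (1 / alpha E L0 + (1 + real d) * w_param V E L0))"
proof -
  let ?R = "reach V E L0 0"
  have "lossless_spmf ?R"
    using assms(1,2,5) by (rule lossless_reach)
  have rs_bounds: "0 < rs V E L0 w \<and> rs V E L0 w \<le> c * rs0" if "(w, q) \<in> set_spmf ?R" for w q
    using reach_output_rs_bounds[OF assms(1-3,5) rs_le that] .
  obtain w q where "(w, q) \<in> set_spmf ?R"
    using set_spmf_nonempty_if_lossless[OF \<open>lossless_spmf ?R\<close>] by auto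
  then have "0 < c * rs0"
    using rs_bounds by fastforce
  then have "0 \<le> rs0"
    using \<open>1 < c\<close> by (simp add: zero_less_mult_iff)
  have accept: "1 / c \<le> min 1 (rs0 / rs V E L0 w)" if "(w, q) \<in> set_spmf ?R" for w q
  proof -
    have "1 / c \<le> rs0 / rs V E L0 w"
      using rs_bounds[OF that] \<open>1 < c\<close> by (simp add: divide_simps mult.commute)
    then show ?thesis
      using \<open>1 < c\<close> by simp
  qed
  have "0 \<le> 1 / alpha E L0 + (1 + real d) * w_param V E L0"
    using \<open>alpha E L0 > 0\<close> w_param_nonneg by simp
  then have "expected_queries (reach_reject V E L0 rs0 0)
      \<le> ennreal (c * (1 / alpha E L0 + (1 + real d) * w_param V E L0))"
    using \<open>lossless_spmf ?R\<close> \<open>0 \<le> rs0\<close> \<open>1 < c\<close> accept reach_queries_le[OF assms(1-3,5) boundary]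
    by (intro reach_reject_queries_le[where c=c]) simp_all
  then show "expected_queries (sample V E L0 lbar rs0)
         \<le> ennreal (c * (1 / alpha E L0 + (1 + real d) * w_param V E L0))"
    by (rule expected_queries_sample_le)
  show "lossless_spmf (sample V E L0 lbar rs0)"
    using \<open>lossless_spmf ?R\<close> \<open>0 \<le> rs0\<close> \<open>1 < c\<close> accept
    by (intro lossless_sample lossless_reach_reject[where c=c]) simp_all
qed

lemma le_twice_if_one_le:
  fixes c x w :: real
  assumes "1 \<le> d" and "0 \<le> c" and "0 \<le> x" and "0 \<le> w"
  shows "c * (x + (1 + real d) * w) \<le> 2 * (c * (x + w * real d))"
proof -
  have "w \<le> w * real d"
    using assms(1,4) by (simp add: mult_le_cancel_left1)
  then have "x + (1 + real d) * w \<le> 2 * (x + w * real d)"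
    using \<open>0 \<le> x\<close> by (simp add: algebra_simps)
  then show ?thesis
    using \<open>0 \<le> c\<close> by (simp add: mult_left_mono mult.left_commute)
qed

theorem theorem3p2:
  shows "\<exists>K::real. \<forall>V E L0 (lbar::real) (rs0::real) (c::real) (d::nat).
    finite V \<and> E \<subseteq> V \<times> V \<and> sym E \<and> L0 \<subseteq> V \<and> lbar \<ge> 0
    \<and> c > 1
    \<and> (\<forall>v\<in>layer2 E L0. rs0 \<le> rs V E L0 v \<and> rs V E L0 v \<le> c * rs0)
    \<and> alpha E L0 > 0
    \<and> (\<forall>C\<in>components_ge2 V E L0. card {(x, y) \<in> E. x \<in> C \<and> y \<notin> C} \<le> d * card C)
    \<longrightarrow> lossless_spmf (sample V E L0 lbar rs0)
      \<and> expected_queries (sample V E L0 lbar rs0)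
          \<le> ennreal (K * (c * (1 / alpha E L0 + w_param V E L0 * real d)))"
proof (intro exI[of _ 2] allI impI conjI)
  fix V E L0 and lbar rs0 c :: real and d :: nat
  assume "finite V \<and> E \<subseteq> V \<times> V \<and> sym E \<and> L0 \<subseteq> V \<and> lbar \<ge> 0 \<and> c > 1
    \<and> (\<forall>v\<in>layer2 E L0. rs0 \<le> rs V E L0 v \<and> rs V E L0 v \<le> c * rs0) \<and> alpha E L0 > 0
    \<and> (\<forall>C\<in>components_ge2 V E L0. card {(x, y) \<in> E. x \<in> C \<and> y \<notin> C} \<le> d * card C)"
  \<comment> \<open>The lower bound on \<open>rs\<close> (which makes the output uniform), \<open>L0 \<subseteq> V\<close> and \<open>lbar \<ge> 0\<close>
    do not affect the number of queries.\<close>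
  then have hyps: "finite V" "E \<subseteq> V \<times> V" "sym E" "1 < c" "alpha E L0 > 0"
      "\<forall>v\<in>layer2 E L0. rs V E L0 v \<le> c * rs0"
      "\<forall>C\<in>components_ge2 V E L0. card {(x, y) \<in> E. x \<in> C \<and> y \<notin> C} \<le> d * card C"
    by auto
  show "lossless_spmf (sample V E L0 lbar rs0)"
    using hyps by (rule sample_queries_le)
  have "1 \<le> d"
    using hyps(1-3,5,7) by (rule boundary_factor_ge_1)
  then have "c * (1 / alpha E L0 + (1 + real d) * w_param V E L0)
      \<le> 2 * (c * (1 / alpha E L0 + w_param V E L0 * real d))"
    using hyps(4,5) w_param_nonneg by (intro le_twice_if_one_le) simp_all
  then show "expected_queries (sample V E L0 lbar rs0)
      \<le> ennreal (2 * (c * (1 / alpha E L0 + w_param V E L0 * real d)))"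
    using sample_queries_le(2)[OF hyps] by (meson ennreal_leI order_trans)
qed

end
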